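(* For two-stage edge-weighted bipartite matching with advice, the optimal robustness-consistency tradeoff is the line segment between $(R,C)=(0,1)$ and $(R,C)=(\tfrac12,\tfrac12)$: (i) for every $R\in[0,\tfrac12]$ there is an algorithm that is $R$-robust and $(1-R)$-consistent; (ii) for every $R\ge 0$, every $R$-robust algorithm is at most $(1-R)$-consistent (in particular no algorithm is more than $\tfrac12$-robust).
   Context: Setting (two-stage edge-weighted bipartite matching with advice). A bipartite graph $G=(D,S,E)$ with nonnegative edge weights $w_e$ has offline vertices $S$ and online vertices $D=D_1\sqcup D_2$ arriving in two stages; $E_k$ is the set of edges between $D_k$ and $S$. An algorithm sees $(D_1,S,E_1)$ and the advice (a matching $A\subseteq E_1$), irrevocably chooses a (possibly random) matching $M_1\subseteq E_1$, then sees $E_2$ and chooses a matching $M_2\subseteq E_2$ such that $M_1\cup M_2$ is a matching; its value is the expected total edge weight of $M_1\cup M_2$. $\mathsf{OPT}(G)$ is the maximum weight of a matching in $G$; $\mathsf{ADVICE}(G,A)=w(A)+\max\{w(M): M\subseteq E_2,\ A\cup M\text{ a matching}\}$. An algorithm is $R$-robust if its value is $\ge R\cdot\mathsf{OPT}(G)$ for all $G,A$, and $C$-consistent if its value is $\ge C\cdot\mathsf{ADVICE}(G,A)$ for all $G,A$. *)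

theory Defs
  imports "HOL-Probability.Probability_Mass_Function"
begin

text \<open>Edges are pairs (d, s) with d an online vertex and s an offline vertex.
  Vertices are labelled by natural numbers; the position in the pair distinguishes
  the sides of the bipartition.\<close>

type_synonym edge = "nat \<times> nat"

definition matching :: "edge set \<Rightarrow> bool" where
  "matching M \<longleftrightarrow> (\<forall>e\<in>M. \<forall>e'\<in>M. e \<noteq> e' \<longrightarrow> fst e \<noteq> fst e' \<and> snd e \<noteq> snd e')"

definition weight :: "(edge \<Rightarrow> real) \<Rightarrow> edge set \<Rightarrow> real" where
  "weight w M = (\<Sum>e\<in>M. w e)"

definition two_stage_instance ::
  "nat set \<Rightarrow> nat set \<Rightarrow> nat set \<Rightarrow> edge set \<Rightarrow> edge set \<Rightarrow> (edge \<Rightarrow> real) \<Rightarrow> bool" where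
  "two_stage_instance D1 D2 S E1 E2 w \<longleftrightarrow>
     finite D1 \<and> finite D2 \<and> finite S \<and> D1 \<inter> D2 = {} \<and>
     E1 \<subseteq> D1 \<times> S \<and> E2 \<subseteq> D2 \<times> S \<and> (\<forall>e\<in>E1 \<union> E2. 0 \<le> w e)"

definition valid_advice :: "edge set \<Rightarrow> edge set \<Rightarrow> bool" where
  "valid_advice E1 A \<longleftrightarrow> A \<subseteq> E1 \<and> matching A"

definition restrict_w :: "edge set \<Rightarrow> (edge \<Rightarrow> real) \<Rightarrow> edge \<Rightarrow> real" where
  "restrict_w E w = (\<lambda>e. if e \<in> E then w e else 0)"

definition OPT :: "edge set \<Rightarrow> edge set \<Rightarrow> (edge \<Rightarrow> real) \<Rightarrow> real" where
  "OPT E1 E2 w = Max (weight w ` {M. M \<subseteq> E1 \<union> E2 \<and> matching M})"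

definition ADVICE :: "edge set \<Rightarrow> (edge \<Rightarrow> real) \<Rightarrow> edge set \<Rightarrow> real" where
  "ADVICE E2 w A = weight w A + Max (weight w ` {M. M \<subseteq> E2 \<and> matching (A \<union> M)})"

text \<open>An algorithm: stage 1 sees (D1, S, E1, weights on E1) and the advice A and outputs a
  random matching M1; stage 2 additionally sees the realised M1 and (D2, E2, weights on E2)
  and outputs a random M2.\<close>

type_synonym stage1_alg =
  "nat set \<Rightarrow> nat set \<Rightarrow> edge set \<Rightarrow> (edge \<Rightarrow> real) \<Rightarrow> edge set \<Rightarrow> edge set pmf"
type_synonym stage2_alg =
  "nat set \<Rightarrow> nat set \<Rightarrow> edge set \<Rightarrow> (edge \<Rightarrow> real) \<Rightarrow> edge set \<Rightarrow> edge set
    \<Rightarrow> nat set \<Rightarrow> edge set \<Rightarrow> (edge \<Rightarrow> real) \<Rightarrow> edge set pmf"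
type_synonym algorithm = "stage1_alg \<times> stage2_alg"

definition stage1_out :: "algorithm \<Rightarrow> nat set \<Rightarrow> nat set \<Rightarrow> edge set \<Rightarrow> edge set
    \<Rightarrow> (edge \<Rightarrow> real) \<Rightarrow> edge set \<Rightarrow> edge set pmf" where
  "stage1_out alg D1 S E1 E2 w A = fst alg D1 S E1 (restrict_w E1 w) A"

definition stage2_out :: "algorithm \<Rightarrow> nat set \<Rightarrow> nat set \<Rightarrow> nat set \<Rightarrow> edge set \<Rightarrow> edge set
    \<Rightarrow> (edge \<Rightarrow> real) \<Rightarrow> edge set \<Rightarrow> edge set \<Rightarrow> edge set pmf" where
  "stage2_out alg D1 D2 S E1 E2 w A M1 =
     snd alg D1 S E1 (restrict_w E1 w) A M1 D2 E2 (restrict_w E2 w)"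

definition valid_alg :: "algorithm \<Rightarrow> bool" where
  "valid_alg alg \<longleftrightarrow>
     (\<forall>D1 D2 S E1 E2 w A. two_stage_instance D1 D2 S E1 E2 w \<and> valid_advice E1 A \<longrightarrow>
        (\<forall>M1 \<in> set_pmf (stage1_out alg D1 S E1 E2 w A).
            M1 \<subseteq> E1 \<and> matching M1 \<and>
            (\<forall>M2 \<in> set_pmf (stage2_out alg D1 D2 S E1 E2 w A M1).
                M2 \<subseteq> E2 \<and> matching (M1 \<union> M2))))"

definition alg_value :: "algorithm \<Rightarrow> nat set \<Rightarrow> nat set \<Rightarrow> nat set \<Rightarrow> edge set \<Rightarrow> edge set
    \<Rightarrow> (edge \<Rightarrow> real) \<Rightarrow> edge set \<Rightarrow> real" where
  "alg_value alg D1 D2 S E1 E2 w A =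
     measure_pmf.expectation (stage1_out alg D1 S E1 E2 w A)
       (\<lambda>M1. measure_pmf.expectation (stage2_out alg D1 D2 S E1 E2 w A M1)
          (\<lambda>M2. weight w (M1 \<union> M2)))"

definition robust :: "real \<Rightarrow> algorithm \<Rightarrow> bool" where
  "robust R alg \<longleftrightarrow>
     (\<forall>D1 D2 S E1 E2 w A. two_stage_instance D1 D2 S E1 E2 w \<and> valid_advice E1 A \<longrightarrow>
        alg_value alg D1 D2 S E1 E2 w A \<ge> R * OPT E1 E2 w)"

definition consistent :: "real \<Rightarrow> algorithm \<Rightarrow> bool" where
  "consistent C alg \<longleftrightarrow>
     (\<forall>D1 D2 S E1 E2 w A. two_stage_instance D1 D2 S E1 E2 w \<and> valid_advice E1 A \<longrightarrow>
        alg_value alg D1 D2 S E1 E2 w A \<ge> C * ADVICE E2 w A)"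

end

(* Achievability: with probability 1 - 2R follow the advice, with probability R take a heaviest
   stage-1 matching B1, and with probability R take nothing; in stage 2 add a heaviest feasible
   stage-2 matching.  The last two branches together earn at least w(B1) + w(B2), where B2 is a
   heaviest stage-2 matching, and this sum dominates both OPT and ADVICE.

   Optimality: take one offline vertex, a stage-1 edge of weight 1 that the advice recommends,
   and a stage-2 edge of weight W to the same offline vertex.  Stage 1 cannot see W, so the
   algorithm accepts the advice edge with some fixed probability q.  Consistency (ADVICE = 1)
   forces C \<le> q, robustness for W = 0 forces R \<le> q, and robustness for W \<rightarrow> \<infinity> forces
   R \<le> 1 - q. *)

theory Submission
  imports Defs
begin

lemma expectation_mono_finite_support:
  fixes f g :: "'a \<Rightarrow> real"
  assumes "finite (set_pmf p)" "\<And>x. x \<in> set_pmf p \<Longrightarrow> f x \<le> g x"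
  shows "measure_pmf.expectation p f \<le> measure_pmf.expectation p g"
  using assms
  by (intro integral_mono_AE) (auto simp: integrable_measure_pmf_finite AE_measure_pmf_iff)

lemma matching_empty [simp]: "matching {}"
  by (simp add: matching_def)

lemma matching_subset: "matching M \<Longrightarrow> N \<subseteq> M \<Longrightarrow> matching N"
  unfolding matching_def by blast

lemma weight_restrict_w: "M \<subseteq> E \<Longrightarrow> weight (restrict_w E w) M = weight w M"
  unfolding weight_def restrict_w_def by (intro sum.cong) auto

lemma weight_nonneg: "(\<forall>e\<in>Y. 0 \<le> w e) \<Longrightarrow> 0 \<le> weight w Y"
  unfolding weight_def by (intro sum_nonneg) auto

lemma weight_union_disjoint:
  "finite X \<Longrightarrow> finite Y \<Longrightarrow> X \<inter> Y = {} \<Longrightarrow> weight w (X \<union> Y) = weight w X + weight w Y"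
  unfolding weight_def by (rule sum.union_disjoint)

lemma two_stage_instance_facts:
  assumes "two_stage_instance D1 D2 S E1 E2 w"
  shows "finite E1" "finite E2" "E1 \<inter> E2 = {}" "\<forall>e\<in>E1 \<union> E2. 0 \<le> w e"
  using assms unfolding two_stage_instance_def
  by (auto intro: finite_subset[of _ "D1 \<times> S"] finite_subset[of _ "D2 \<times> S"])

lemma finite_matching_extensions:
  "finite E \<Longrightarrow> finite {M. M \<subseteq> E \<and> matching (M1 \<union> M)}"
  by (rule finite_subset[of _ "Pow E"]) auto

lemma finite_matchings: "finite E \<Longrightarrow> finite {M. M \<subseteq> E \<and> matching M}"
  by (rule finite_subset[of _ "Pow E"]) auto

lemma weight_le_OPT:
  assumes "finite E1" "finite E2" "M \<subseteq> E1 \<union> E2" "matching M"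
  shows "weight w M \<le> OPT E1 E2 w"
  unfolding OPT_def using assms
  by (intro Max_ge finite_imageI finite_matchings) auto

subsection \<open>Heaviest extension of a matching\<close>

definition best_extension :: "edge set \<Rightarrow> (edge \<Rightarrow> real) \<Rightarrow> edge set \<Rightarrow> edge set" where
  "best_extension E w M1 = (SOME M. M \<subseteq> E \<and> matching (M1 \<union> M) \<and>
      (\<forall>M'. M' \<subseteq> E \<and> matching (M1 \<union> M') \<longrightarrow> weight w M' \<le> weight w M))"

lemma best_extension:
  assumes "finite E" "matching M1"
  shows best_extension_subset: "best_extension E w M1 \<subseteq> E"
    and best_extension_matching: "matching (M1 \<union> best_extension E w M1)"
    and best_extension_max:
      "\<And>M. M \<subseteq> E \<Longrightarrow> matching (M1 \<union> M) \<Longrightarrow> weight w M \<le> weight w (best_extension E w M1)"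
proof -
  let ?C = "{M. M \<subseteq> E \<and> matching (M1 \<union> M)}"
  have "Max (weight w ` ?C) \<in> weight w ` ?C"
    using assms by (intro Max_in finite_imageI finite_matching_extensions) auto
  then obtain M where "M \<in> ?C" "weight w M = Max (weight w ` ?C)"
    by auto
  with assms have "\<exists>M. M \<subseteq> E \<and> matching (M1 \<union> M) \<and>
      (\<forall>M'. M' \<subseteq> E \<and> matching (M1 \<union> M') \<longrightarrow> weight w M' \<le> weight w M)"
    by (auto simp: finite_matching_extensions)
  then have "best_extension E w M1 \<subseteq> E \<and> matching (M1 \<union> best_extension E w M1) \<and>
      (\<forall>M'. M' \<subseteq> E \<and> matching (M1 \<union> M') \<longrightarrow> weight w M' \<le> weight w (best_extension E w M1))"
    unfolding best_extension_def by (rule someI_ex)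
  then show "best_extension E w M1 \<subseteq> E" "matching (M1 \<union> best_extension E w M1)"
    "\<And>M. M \<subseteq> E \<Longrightarrow> matching (M1 \<union> M) \<Longrightarrow> weight w M \<le> weight w (best_extension E w M1)"
    by auto
qed

lemma best_extension_restrict_w: "best_extension E (restrict_w E w) M1 = best_extension E w M1"
proof -
  have "weight (restrict_w E w) M' \<le> weight (restrict_w E w) M \<longleftrightarrow> weight w M' \<le> weight w M"
    if "M \<subseteq> E" "M' \<subseteq> E" for M M'
    using that by (simp add: weight_restrict_w)
  then show ?thesis
    unfolding best_extension_def by metis
qed

lemma Max_extensions_eq_best_extension:
  assumes "finite E" "matching M1"
  shows "Max (weight w ` {M. M \<subseteq> E \<and> matching (M1 \<union> M)}) = weight w (best_extension E w M1)"
  using assms best_extension[OF assms, where w=w]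
  by (intro Max_eqI finite_imageI finite_matching_extensions) auto

lemma ADVICE_eq_best_extension:
  assumes "two_stage_instance D1 D2 S E1 E2 w" "valid_advice E1 A"
  shows "ADVICE E2 w A = weight w A + weight w (best_extension E2 w A)"
  using assms two_stage_instance_facts[OF assms(1)]
  by (simp add: ADVICE_def valid_advice_def Max_extensions_eq_best_extension)

lemma OPT_le_best_sum:
  assumes "two_stage_instance D1 D2 S E1 E2 w"
  shows "OPT E1 E2 w \<le> weight w (best_extension E1 w {}) + weight w (best_extension E2 w {})"
proof -
  note inst = two_stage_instance_facts[OF assms]
  have "weight w M \<le> weight w (best_extension E1 w {}) + weight w (best_extension E2 w {})"
    if M: "M \<subseteq> E1 \<union> E2" "matching M" for M
  proof -
    have "finite M"
      using M(1) inst by (meson finite_UnI finite_subset)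
    then have "weight w M = weight w (M \<inter> E1) + weight w (M - E1)"
      unfolding weight_def by (rule sum.Int_Diff)
    moreover have "weight w (M \<inter> E1) \<le> weight w (best_extension E1 w {})"
      using M matching_subset[OF M(2)] by (intro best_extension_max inst) auto
    moreover have "weight w (M - E1) \<le> weight w (best_extension E2 w {})"
      using M matching_subset[OF M(2)] by (intro best_extension_max inst) auto
    ultimately show ?thesis
      by simp
  qed
  moreover have "finite {M. M \<subseteq> E1 \<union> E2 \<and> matching M}"
    using inst by (intro finite_matchings) auto
  ultimately show ?thesis
    unfolding OPT_def by (subst Max_le_iff) auto
qed

lemma ADVICE_le_best_sum:
  assumes "two_stage_instance D1 D2 S E1 E2 w" "valid_advice E1 A"
  shows "ADVICE E2 w A \<le> weight w (best_extension E1 w {}) + weight w (best_extension E2 w {})"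
proof -
  note inst = two_stage_instance_facts[OF assms(1)]
  have A: "A \<subseteq> E1" "matching A"
    using assms(2) by (auto simp: valid_advice_def)
  have "weight w A \<le> weight w (best_extension E1 w {})"
    using A inst by (intro best_extension_max) auto
  moreover have "weight w (best_extension E2 w A) \<le> weight w (best_extension E2 w {})"
    using A inst best_extension_subset[of E2 A w]
      matching_subset[OF best_extension_matching[of E2 A w]]
    by (intro best_extension_max) auto
  ultimately show ?thesis
    using ADVICE_eq_best_extension[OF assms] by simp
qed

subsection \<open>The hedging algorithm\<close>

definition hedge_pmf :: "real \<Rightarrow> 'a \<Rightarrow> 'a \<Rightarrow> 'a \<Rightarrow> 'a pmf" where
  "hedge_pmf R a b c = bernoulli_pmf (1 - 2 * R) \<bind>
     (\<lambda>follow. if follow then return_pmf a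
               else map_pmf (\<lambda>h. if h then b else c) (bernoulli_pmf (1/2)))"

lemma set_hedge_pmf: "set_pmf (hedge_pmf R a b c) \<subseteq> {a, b, c}"
  by (auto simp: hedge_pmf_def set_bind_pmf split: if_splits)

lemma expectation_hedge_pmf:
  fixes f :: "'a \<Rightarrow> real"
  assumes "0 \<le> R" "R \<le> 1/2"
  shows "measure_pmf.expectation (hedge_pmf R a b c) f = (1 - 2 * R) * f a + R * f b + R * f c"
proof -
  have "measure_pmf.expectation (hedge_pmf R a b c) f =
      (\<Sum>follow\<in>UNIV. pmf (bernoulli_pmf (1 - 2 * R)) follow *\<^sub>R
         measure_pmf.expectation (if follow then return_pmf a
           else map_pmf (\<lambda>h. if h then b else c) (bernoulli_pmf (1/2))) f)"
    unfolding hedge_pmf_def by (rule pmf_expectation_bind) auto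
  then show ?thesis
    using assms by (simp add: UNIV_bool algebra_simps)
qed

definition hedge_alg :: "real \<Rightarrow> algorithm" where
  "hedge_alg R =
     ((\<lambda>D1 S E1 w A. hedge_pmf R A (best_extension E1 w {}) {}),
      (\<lambda>D1 S E1 w1 A M1 D2 E2 w2. return_pmf (best_extension E2 w2 M1)))"

lemma stage1_out_hedge_alg:
  "stage1_out (hedge_alg R) D1 S E1 E2 w A = hedge_pmf R A (best_extension E1 w {}) {}"
  by (simp add: stage1_out_def hedge_alg_def best_extension_restrict_w)

lemma stage2_out_hedge_alg:
  "stage2_out (hedge_alg R) D1 D2 S E1 E2 w A M1 = return_pmf (best_extension E2 w M1)"
  by (simp add: stage2_out_def hedge_alg_def best_extension_restrict_w)

lemma valid_hedge_alg: "valid_alg (hedge_alg R)"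
  unfolding valid_alg_def
proof (intro allI impI ballI)
  fix D1 D2 S E1 E2 w A M1
  assume inst_adv: "two_stage_instance D1 D2 S E1 E2 w \<and> valid_advice E1 A"
    and M1: "M1 \<in> set_pmf (stage1_out (hedge_alg R) D1 S E1 E2 w A)"
  note inst = two_stage_instance_facts[OF conjunct1[OF inst_adv]]
  have "M1 \<in> {A, best_extension E1 w {}, {}}"
    using M1 set_hedge_pmf by (force simp: stage1_out_hedge_alg)
  then have "M1 \<subseteq> E1 \<and> matching M1"
    using inst_adv inst best_extension_subset[of E1 "{}" w] best_extension_matching[of E1 "{}" w]
    by (auto simp: valid_advice_def)
  then show "M1 \<subseteq> E1 \<and> matching M1 \<and>
      (\<forall>M2\<in>set_pmf (stage2_out (hedge_alg R) D1 D2 S E1 E2 w A M1). M2 \<subseteq> E2 \<and> matching (M1 \<union> M2))"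
    using inst best_extension_subset[of E2 M1 w] best_extension_matching[of E2 M1 w]
    by (simp add: stage2_out_hedge_alg)
qed

lemma weight_union_best_extension:
  assumes "two_stage_instance D1 D2 S E1 E2 w" "M1 \<subseteq> E1" "matching M1"
  shows "weight w (M1 \<union> best_extension E2 w M1) = weight w M1 + weight w (best_extension E2 w M1)"
proof -
  note inst = two_stage_instance_facts[OF assms(1)]
  have "best_extension E2 w M1 \<subseteq> E2"
    using inst assms by (intro best_extension_subset)
  then show ?thesis
    using inst assms by (intro weight_union_disjoint) (auto intro: finite_subset)
qed

lemma alg_value_hedge_alg_ge:
  assumes inst: "two_stage_instance D1 D2 S E1 E2 w" and adv: "valid_advice E1 A"
    and R: "0 \<le> R" "R \<le> 1/2"
  shows "alg_value (hedge_alg R) D1 D2 S E1 E2 w A \<ge>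
    (1 - 2 * R) * ADVICE E2 w A + R * (weight w (best_extension E1 w {}) + weight w (best_extension E2 w {}))"
proof -
  note facts = two_stage_instance_facts[OF inst]
  define B1 where "B1 = best_extension E1 w {}"
  define F where "F = (\<lambda>M1. weight w (M1 \<union> best_extension E2 w M1))"
  have B1: "B1 \<subseteq> E1" "matching B1"
    using facts best_extension_subset[of E1 "{}" w] best_extension_matching[of E1 "{}" w]
    by (auto simp: B1_def)
  have "alg_value (hedge_alg R) D1 D2 S E1 E2 w A = (1 - 2 * R) * F A + R * F B1 + R * F {}"
    using R by (simp add: alg_value_def stage1_out_hedge_alg stage2_out_hedge_alg
        expectation_hedge_pmf F_def B1_def)
  moreover have "F A = ADVICE E2 w A"
    using adv by (simp add: F_def ADVICE_eq_best_extension[OF inst adv]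
        weight_union_best_extension[OF inst] valid_advice_def)
  moreover have "R * weight w B1 \<le> R * F B1"
  proof -
    have "best_extension E2 w B1 \<subseteq> E2"
      using facts B1 by (intro best_extension_subset)
    then have "0 \<le> weight w (best_extension E2 w B1)"
      using facts by (intro weight_nonneg) auto
    then show ?thesis
      using B1 R by (simp add: F_def weight_union_best_extension[OF inst] distrib_left)
  qed
  moreover have "F {} = weight w (best_extension E2 w {})"
    by (simp add: F_def)
  ultimately show ?thesis
    using R by (simp add: B1_def algebra_simps)
qed

lemma ADVICE_nonneg:
  assumes inst: "two_stage_instance D1 D2 S E1 E2 w" and adv: "valid_advice E1 A"
  shows "0 \<le> ADVICE E2 w A"
proof -
  note facts = two_stage_instance_facts[OF inst]
  have "A \<subseteq> E1" "matching A"
    using adv by (auto simp: valid_advice_def)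
  moreover have "best_extension E2 w A \<subseteq> E2"
    using facts \<open>matching A\<close> by (intro best_extension_subset)
  ultimately show ?thesis
    using facts
    by (simp add: ADVICE_eq_best_extension[OF inst adv] add_nonneg_nonneg weight_nonneg subset_eq)
qed

lemma hedge_alg_robust:
  assumes "0 \<le> R" "R \<le> 1/2"
  shows "robust R (hedge_alg R)"
  unfolding robust_def
proof (intro allI impI, elim conjE)
  fix D1 D2 S E1 E2 w A
  assume inst: "two_stage_instance D1 D2 S E1 E2 w" and adv: "valid_advice E1 A"
  have "R * OPT E1 E2 w \<le> R * (weight w (best_extension E1 w {}) + weight w (best_extension E2 w {}))"
    using assms inst by (intro mult_left_mono OPT_le_best_sum) auto
  also have "\<dots> \<le> (1 - 2 * R) * ADVICE E2 w A + \<dots>"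
    using assms ADVICE_nonneg[OF inst adv] by simp
  also have "\<dots> \<le> alg_value (hedge_alg R) D1 D2 S E1 E2 w A"
    using assms by (rule alg_value_hedge_alg_ge[OF inst adv])
  finally show "R * OPT E1 E2 w \<le> alg_value (hedge_alg R) D1 D2 S E1 E2 w A" .
qed

lemma hedge_alg_consistent:
  assumes "0 \<le> R" "R \<le> 1/2"
  shows "consistent (1 - R) (hedge_alg R)"
  unfolding consistent_def
proof (intro allI impI, elim conjE)
  fix D1 D2 S E1 E2 w A
  assume inst: "two_stage_instance D1 D2 S E1 E2 w" and adv: "valid_advice E1 A"
  have "(1 - R) * ADVICE E2 w A = (1 - 2 * R) * ADVICE E2 w A + R * ADVICE E2 w A"
    by algebra
  also have "\<dots> \<le> (1 - 2 * R) * ADVICE E2 w A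
      + R * (weight w (best_extension E1 w {}) + weight w (best_extension E2 w {}))"
    using assms inst adv by (intro add_left_mono mult_left_mono ADVICE_le_best_sum) auto
  also have "\<dots> \<le> alg_value (hedge_alg R) D1 D2 S E1 E2 w A"
    using assms by (rule alg_value_hedge_alg_ge[OF inst adv])
  finally show "(1 - R) * ADVICE E2 w A \<le> alg_value (hedge_alg R) D1 D2 S E1 E2 w A" .
qed

subsection \<open>Upper bound: a heavy edge competing with the advice\<close>

lemma alg_value_le_expectation:
  fixes f :: "edge set \<Rightarrow> real"
  assumes alg: "valid_alg alg" and inst: "two_stage_instance D1 D2 S E1 E2 w"
    and adv: "valid_advice E1 A"
    and bound: "\<And>M1 M2. M1 \<subseteq> E1 \<Longrightarrow> matching M1 \<Longrightarrow> M2 \<subseteq> E2 \<Longrightarrow> matching (M1 \<union> M2)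
                   \<Longrightarrow> weight w (M1 \<union> M2) \<le> f M1"
  shows "alg_value alg D1 D2 S E1 E2 w A \<le> measure_pmf.expectation (stage1_out alg D1 S E1 E2 w A) f"
  unfolding alg_value_def
proof (rule expectation_mono_finite_support)
  note facts = two_stage_instance_facts[OF inst]
  have out: "M1 \<subseteq> E1 \<and> matching M1 \<and>
      (\<forall>M2 \<in> set_pmf (stage2_out alg D1 D2 S E1 E2 w A M1). M2 \<subseteq> E2 \<and> matching (M1 \<union> M2))"
    if "M1 \<in> set_pmf (stage1_out alg D1 S E1 E2 w A)" for M1
    using alg inst adv that unfolding valid_alg_def by blast
  show "finite (set_pmf (stage1_out alg D1 S E1 E2 w A))"
    using out facts by (meson Pow_iff finite_Pow_iff finite_subset subsetI)
  fix M1
  assume "M1 \<in> set_pmf (stage1_out alg D1 S E1 E2 w A)"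
  note M1 = out[OF this]
  have "measure_pmf.expectation (stage2_out alg D1 D2 S E1 E2 w A M1) (\<lambda>M2. weight w (M1 \<union> M2))
      \<le> measure_pmf.expectation (stage2_out alg D1 D2 S E1 E2 w A M1) (\<lambda>_. f M1)"
  proof (rule expectation_mono_finite_support)
    show "finite (set_pmf (stage2_out alg D1 D2 S E1 E2 w A M1))"
      using M1 facts by (meson Pow_iff finite_Pow_iff finite_subset subsetI)
  qed (use M1 bound in auto)
  then show "measure_pmf.expectation (stage2_out alg D1 D2 S E1 E2 w A M1) (\<lambda>M2. weight w (M1 \<union> M2))
      \<le> f M1"
    by simp
qed

definition conflict_E1 :: "edge set" where
  "conflict_E1 = {(0, 0)}"

definition conflict_E2 :: "edge set" where
  "conflict_E2 = {(1, 0)}"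

definition conflict_w :: "real \<Rightarrow> edge \<Rightarrow> real" where
  "conflict_w W e = (if e = (0, 0) then 1 else if e = (1, 0) then W else 0)"

lemma conflict_instance: "0 \<le> W \<Longrightarrow> two_stage_instance {0} {1} {0} conflict_E1 conflict_E2 (conflict_w W)"
  by (simp add: two_stage_instance_def conflict_E1_def conflict_E2_def conflict_w_def)

lemma conflict_advice: "valid_advice conflict_E1 conflict_E1"
  by (simp add: valid_advice_def conflict_E1_def matching_def)

lemma ADVICE_conflict: "ADVICE conflict_E2 (conflict_w W) conflict_E1 = 1"
proof -
  have "{M. M \<subseteq> conflict_E2 \<and> matching (conflict_E1 \<union> M)} = {{}}"
    by (auto simp: conflict_E1_def conflict_E2_def matching_def subset_singleton_iff)
  then show ?thesis
    by (simp add: ADVICE_def weight_def conflict_E1_def conflict_w_def)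
qed

lemma OPT_conflict_ge: "max 1 W \<le> OPT conflict_E1 conflict_E2 (conflict_w W)"
proof -
  have "weight (conflict_w W) {(0, 0)} \<le> OPT conflict_E1 conflict_E2 (conflict_w W)"
    "weight (conflict_w W) {(1, 0)} \<le> OPT conflict_E1 conflict_E2 (conflict_w W)"
    by (intro weight_le_OPT; simp add: conflict_E1_def conflict_E2_def matching_def)+
  then show ?thesis
    by (simp add: weight_def conflict_w_def)
qed

text \<open>Stage 1 of the conflict instance does not see the weight W of the competing stage-2
  edge, so the probability of accepting the advice edge is the same for all W.\<close>

definition accept_prob :: "algorithm \<Rightarrow> real" where
  "accept_prob alg =
     pmf (stage1_out alg {0} {0} conflict_E1 conflict_E2 (conflict_w 0) conflict_E1) conflict_E1"

lemma stage1_out_conflict: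
  "stage1_out alg {0} {0} conflict_E1 conflict_E2 (conflict_w W) conflict_E1 =
   stage1_out alg {0} {0} conflict_E1 conflict_E2 (conflict_w 0) conflict_E1"
proof -
  have "restrict_w conflict_E1 (conflict_w W) = restrict_w conflict_E1 (conflict_w 0)"
    by (auto simp: restrict_w_def conflict_E1_def conflict_w_def)
  then show ?thesis
    by (simp add: stage1_out_def)
qed

lemma alg_value_conflict_le:
  assumes alg: "valid_alg alg" and W: "0 \<le> W"
  shows "alg_value alg {0} {1} {0} conflict_E1 conflict_E2 (conflict_w W) conflict_E1
         \<le> accept_prob alg + W * (1 - accept_prob alg)"
proof -
  define P where "P = stage1_out alg {0} {0} conflict_E1 conflict_E2 (conflict_w 0) conflict_E1"
  define f where "f = (\<lambda>M1 :: edge set. if M1 = conflict_E1 then 1 else W)"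
  note inst = conflict_instance[OF W] and adv = conflict_advice
  have supp: "set_pmf P \<subseteq> {{}, conflict_E1}"
    using alg conflict_instance[of 0] adv unfolding valid_alg_def P_def
    by (force simp: conflict_E1_def subset_singleton_iff)
  have "alg_value alg {0} {1} {0} conflict_E1 conflict_E2 (conflict_w W) conflict_E1
      \<le> measure_pmf.expectation P f"
    unfolding P_def stage1_out_conflict[of alg W, symmetric]
  proof (rule alg_value_le_expectation[OF alg inst adv])
    fix M1 M2
    assume "M1 \<subseteq> conflict_E1" "M2 \<subseteq> conflict_E2" "matching (M1 \<union> M2)"
    then show "weight (conflict_w W) (M1 \<union> M2) \<le> f M1"
      using W by (auto simp: f_def weight_def conflict_E1_def conflict_E2_def conflict_w_def
          matching_def subset_singleton_iff)
  qed
  also have "\<dots> = W * pmf P {} + accept_prob alg"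
    using supp by (subst integral_measure_pmf_real[where A = "{{}, conflict_E1}"])
      (auto simp: f_def accept_prob_def P_def conflict_E1_def)
  also have "pmf P {} = 1 - accept_prob alg"
    using sum_pmf_eq_1[OF _ supp] by (simp add: accept_prob_def P_def conflict_E1_def)
  finally show ?thesis
    by simp
qed

lemma le_of_linear_bound:
  fixes a b c :: real
  assumes "\<And>W. 1 \<le> W \<Longrightarrow> a * W \<le> b * W + c"
  shows "a \<le> b"
proof (rule ccontr)
  assume "\<not> a \<le> b"
  define W where "W = max 1 ((\<bar>c\<bar> + 1) / (a - b))"
  have "(\<bar>c\<bar> + 1) / (a - b) \<le> W"
    by (simp add: W_def)
  then have "\<bar>c\<bar> + 1 \<le> (a - b) * W"
    using \<open>\<not> a \<le> b\<close> by (simp add: pos_divide_le_eq mult.commute)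
  moreover have "a * W \<le> b * W + c"
    by (rule assms) (simp add: W_def)
  ultimately show False
    by (simp add: algebra_simps)
qed

lemma robust_accept_prob_bounds:
  assumes alg: "valid_alg alg" and rob: "robust R alg" and R: "0 \<le> R"
  shows "R \<le> accept_prob alg" "accept_prob alg \<le> 1 - R"
proof -
  have robust_bound: "R * max 1 W \<le> accept_prob alg + W * (1 - accept_prob alg)" if "0 \<le> W" for W
  proof -
    have "R * max 1 W \<le> R * OPT conflict_E1 conflict_E2 (conflict_w W)"
      using R by (intro mult_left_mono OPT_conflict_ge)
    also have "\<dots> \<le> alg_value alg {0} {1} {0} conflict_E1 conflict_E2 (conflict_w W) conflict_E1"
      using rob conflict_instance[OF that] conflict_advice unfolding robust_def by blast
    also have "\<dots> \<le> accept_prob alg + W * (1 - accept_prob alg)"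
      using alg that by (rule alg_value_conflict_le)
    finally show ?thesis .
  qed
  show "R \<le> accept_prob alg"
    using robust_bound[of 0] by simp
  have "R \<le> 1 - accept_prob alg"
  proof (rule le_of_linear_bound)
    fix W :: real
    assume "1 \<le> W"
    then show "R * W \<le> (1 - accept_prob alg) * W + accept_prob alg"
      using robust_bound[of W] by (simp add: max_def algebra_simps)
  qed
  then show "accept_prob alg \<le> 1 - R"
    by simp
qed

lemma consistent_le_accept_prob:
  assumes alg: "valid_alg alg" and con: "consistent C alg"
  shows "C \<le> accept_prob alg"
proof -
  have "C * ADVICE conflict_E2 (conflict_w 0) conflict_E1
      \<le> alg_value alg {0} {1} {0} conflict_E1 conflict_E2 (conflict_w 0) conflict_E1"
    using con conflict_instance[of 0] conflict_advice unfolding consistent_def by blast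
  also have "\<dots> \<le> accept_prob alg"
    using alg_value_conflict_le[OF alg, of 0] by simp
  finally show ?thesis
    by (simp add: ADVICE_conflict)
qed

theorem mainTheorem7:
  shows "(\<forall>R::real. 0 \<le> R \<and> R \<le> 1/2 \<longrightarrow>
            (\<exists>alg. valid_alg alg \<and> robust R alg \<and> consistent (1 - R) alg))
       \<and> (\<forall>(R::real) C alg. 0 \<le> R \<and> valid_alg alg \<and> robust R alg \<and> consistent C alg
            \<longrightarrow> C \<le> 1 - R)
       \<and> (\<forall>(R::real) alg. valid_alg alg \<and> robust R alg \<longrightarrow> R \<le> 1/2)"
proof (intro conjI allI impI; elim conjE)
  fix R :: real
  assume "0 \<le> R" "R \<le> 1/2"
  then show "\<exists>alg. valid_alg alg \<and> robust R alg \<and> consistent (1 - R) alg"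
    using valid_hedge_alg hedge_alg_robust hedge_alg_consistent by blast
next
  fix R C :: real and alg
  assume "0 \<le> R" "valid_alg alg" "robust R alg" "consistent C alg"
  then show "C \<le> 1 - R"
    using consistent_le_accept_prob robust_accept_prob_bounds(2) by fastforce
next
  fix R :: real and alg
  assume "valid_alg alg" "robust R alg"
  then show "R \<le> 1/2"
    using robust_accept_prob_bounds[of alg R] by (cases "0 \<le> R") auto
qed

end
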